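(* Let $V$ be a fixed set of $n$ vertices and $\epsilon>0$. Consider the algorithm ALG that, given a private edge set $E$ on $V$, sets $V_1=V$, $E_1=E$ and for $i=1,\dots,n$: lets $w_i=(4/\epsilon)\sqrt{n/(n-i+1)}$, picks a vertex $v\in V_i$ with probability proportional to $d_{E_i}(v)+w_i$, outputs $v$, and sets $V_{i+1}=V_i\setminus\{v\}$ and $E_{i+1}=E_i$ minus all edges incident to $v$. The output is thus a permutation of $V$. Then ALG is $\epsilon$-differentially private: for any two edge sets $A,B$ on $V$ whose symmetric difference is a single edge and any set $\mathcal{P}$ of permutations, $\Pr[\mathrm{ALG}(A)\in\mathcal{P}]\le e^{\epsilon}\Pr[\mathrm{ALG}(B)\in\mathcal{P}]$.
   Context: $d_{E_i}(v)$ denotes the number of edges in $E_i$ incident to $v$. *)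

theory Defs
  imports "HOL-Probability.Probability"
begin

definition edge_set_on :: "'a set \<Rightarrow> 'a set set \<Rightarrow> bool" where
  "edge_set_on V E \<longleftrightarrow> (\<forall>e\<in>E. e \<subseteq> V \<and> card e = 2)"

definition deg :: "'a set set \<Rightarrow> 'a \<Rightarrow> nat" where
  "deg E v = card {e \<in> E. v \<in> e}"

definition remove_incident :: "'a set set \<Rightarrow> 'a \<Rightarrow> 'a set set" where
  "remove_incident E v = {e \<in> E. v \<notin> e}"

definition weighted_choice :: "('a \<Rightarrow> real) \<Rightarrow> 'a set \<Rightarrow> 'a pmf" where
  "weighted_choice f S = embed_pmf (\<lambda>v. if v \<in> S then f v / (\<Sum>u\<in>S. f u) else 0)"

definition noise_weight :: "real \<Rightarrow> nat \<Rightarrow> nat \<Rightarrow> real" where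
  "noise_weight eps n i = (4 / eps) * sqrt (real n / (real n - real i + 1))"

text \<open>Remaining iterations of ALG: with k iterations left, the current step index is
  i = n - k + 1 (so steps run i = 1..n when started with k = n).\<close>
primrec alg_rec :: "real \<Rightarrow> nat \<Rightarrow> nat \<Rightarrow> 'a set \<Rightarrow> 'a set set \<Rightarrow> 'a list pmf" where
  "alg_rec eps n 0 Vi Ei = return_pmf []"
| "alg_rec eps n (Suc k) Vi Ei =
     bind_pmf
       (weighted_choice (\<lambda>u. real (deg Ei u) + noise_weight eps n (n - k)) Vi)
       (\<lambda>v. map_pmf (\<lambda>rest. v # rest)
               (alg_rec eps n k (Vi - {v}) (remove_incident Ei v)))"

definition ALG :: "real \<Rightarrow> 'a set \<Rightarrow> 'a set set \<Rightarrow> 'a list pmf" where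
  "ALG eps V E = alg_rec eps (card V) (card V) V E"

end

theory Submission imports Defs begin

text \<open>Compare the likelihood of one output sequence under \<open>E\<close> and under \<open>E \<union> {e}\<close>, step by
  step. With \<open>k\<close> vertices left the total weight is \<open>D \<ge> k w\<close>, and adding \<open>e\<close> raises it by 2
  and the weight of each endpoint of \<open>e\<close> by 1. Hence picking a vertex outside \<open>e\<close> is at most as
  likely with \<open>e\<close> as without, and at most \<open>1 + 2/(k w)\<close> times as likely without \<open>e\<close> as with it;
  picking an endpoint deletes \<open>e\<close>, after which both runs coincide, and costs a factor at most
  \<open>1 + 1/w \<le> 1 + \<epsilon>/4\<close> in the first direction. In the second direction the factors multiply to
  at most \<open>exp (\<Sum>k=1..n. 2/(k w\<^sub>k)) = exp (\<epsilon>/(2\<surd>n) \<Sum>k=1..n. 1/\<surd>k) \<le> exp \<epsilon>\<close>.\<close>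

lemma pmf_weighted_choice:
  assumes "finite S" "S \<noteq> {}" "\<And>x. x \<in> S \<Longrightarrow> f x > 0"
  shows "pmf (weighted_choice f S) x = (if x \<in> S then f x / sum f S else 0)"
proof -
  have pos: "sum f S > 0" using assms by (meson sum_pos)
  let ?g = "\<lambda>v. if v \<in> S then f v / (\<Sum>u\<in>S. f u) else 0"
  have nonneg: "\<And>v. 0 \<le> ?g v" using assms pos by (auto intro: less_imp_le)
  have "(\<integral>\<^sup>+v. ennreal (?g v) \<partial>count_space UNIV) = (\<Sum>v\<in>S. ennreal (?g v))"
    by (rule nn_integral_count_space') (use assms in auto)
  also have "\<dots> = ennreal (\<Sum>v\<in>S. ?g v)"
    by (rule sum_ennreal, rule nonneg)
  also have "(\<Sum>v\<in>S. ?g v) = 1"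
    using pos by (simp add: sum_divide_distrib[symmetric])
  finally show ?thesis
    unfolding weighted_choice_def using pmf_embed_pmf[of ?g x] nonneg by simp
qed

lemma pmf_degree_choice:
  assumes "finite S" "S \<noteq> {}" "W > 0"
  shows "pmf (weighted_choice (\<lambda>u. real (deg E u) + W) S) y =
     (if y \<in> S then (real (deg E y) + W) / (\<Sum>x\<in>S. real (deg E x) + W) else 0)"
  by (rule pmf_weighted_choice) (use assms in \<open>auto intro: add_nonneg_pos\<close>)

lemma deg_insert:
  assumes "finite F" "e \<notin> F"
  shows "deg (insert e F) x = deg F x + (if x \<in> e then 1 else 0)"
proof -
  have "{e' \<in> insert e F. x \<in> e'} =
      (if x \<in> e then insert e {e' \<in> F. x \<in> e'} else {e' \<in> F. x \<in> e'})" by auto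
  then show ?thesis using assms by (simp add: deg_def)
qed

lemma sum_deg_insert_edge:
  assumes "finite S" "finite F" "e \<notin> F" "e \<subseteq> S" "card e = 2"
  shows "(\<Sum>x\<in>S. real (deg (insert e F) x) + W) = (\<Sum>x\<in>S. real (deg F x) + W) + 2"
proof -
  have "(\<Sum>x\<in>S. real (deg (insert e F) x) + W) =
      (\<Sum>x\<in>S. (real (deg F x) + W) + (if x \<in> e then 1 else 0))"
    using assms by (intro sum.cong) (auto simp: deg_insert)
  also have "\<dots> = (\<Sum>x\<in>S. real (deg F x) + W) + real (card (S \<inter> e))"
    using assms(1) by (simp add: sum.distrib sum.If_cases)
  also have "S \<inter> e = e" using assms(4) by auto
  finally show ?thesis using assms(5) by simp
qed

lemma pmf_degree_choice_insert_edge: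
  assumes "finite S" "finite F" "e \<notin> F" "e \<subseteq> S" "card e = 2" "W > 0" "y \<in> S"
  shows "pmf (weighted_choice (\<lambda>u. real (deg (insert e F) u) + W) S) y =
    (real (deg F y) + (if y \<in> e then 1 else 0) + W) / ((\<Sum>x\<in>S. real (deg F x) + W) + 2)"
proof -
  have "S \<noteq> {}" using assms(7) by auto
  then show ?thesis
    unfolding pmf_degree_choice[OF assms(1) \<open>S \<noteq> {}\<close> assms(6)] sum_deg_insert_edge[OF assms(1-5)]
    using assms by (simp add: deg_insert)
qed

lemma pmf_degree_choice_insert_edge_le:
  assumes "finite S" "finite F" "e \<notin> F" "e \<subseteq> S" "card e = 2" "W > 0"
  shows "pmf (weighted_choice (\<lambda>u. real (deg (insert e F) u) + W) S) y
    \<le> (if y \<in> e then 1 + 1 / W else 1) * pmf (weighted_choice (\<lambda>u. real (deg F u) + W) S) y"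
proof -
  have "S \<noteq> {}" using assms(4,5) by auto
  note pmf_choice = pmf_degree_choice[OF assms(1) this assms(6)]
  define d where "d = real (deg F y)"
  define D where "D = (\<Sum>x\<in>S. real (deg F x) + W)"
  show ?thesis
  proof (cases "y \<in> S")
    case False
    then show ?thesis by (simp add: pmf_choice)
  next
    case True
    have "d + W \<le> D"
      unfolding d_def D_def by (rule member_le_sum) (use assms True in auto)
    moreover have "d \<ge> 0" unfolding d_def by simp
    ultimately have D_pos: "D > 0" using assms(6) by linarith
    have "(d + (if y \<in> e then 1 else 0) + W) / (D + 2)
        \<le> (if y \<in> e then 1 + 1 / W else 1) * ((d + W) / D)"
    proof (cases "y \<in> e")
      case True
      have "d + 1 + W \<le> (1 + 1 / W) * (d + W)"
        using \<open>d \<ge> 0\<close> assms(6) by (simp add: field_simps)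
      then have "(d + 1 + W) / (D + 2) \<le> (1 + 1 / W) * (d + W) / D"
        using D_pos \<open>d \<ge> 0\<close> assms(6) by (intro frac_le) auto
      then show ?thesis using True by simp
    next
      case False
      then show ?thesis using D_pos \<open>d \<ge> 0\<close> assms(6) by (simp add: frac_le)
    qed
    moreover note pmf_degree_choice_insert_edge[OF assms True, folded d_def D_def]
    moreover have "pmf (weighted_choice (\<lambda>u. real (deg F u) + W) S) y = (d + W) / D"
      using True by (simp add: pmf_choice d_def D_def)
    ultimately show ?thesis by simp
  qed
qed

lemma pmf_degree_choice_le_insert_edge:
  assumes "finite S" "finite F" "e \<notin> F" "e \<subseteq> S" "card e = 2" "W > 0"
  shows "pmf (weighted_choice (\<lambda>u. real (deg F u) + W) S) y
    \<le> (1 + 2 / (real (card S) * W)) * pmf (weighted_choice (\<lambda>u. real (deg (insert e F) u) + W) S) y"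
proof -
  have "S \<noteq> {}" using assms(4,5) by auto
  note pmf_choice = pmf_degree_choice[OF assms(1) this assms(6)]
  define d where "d = real (deg F y)"
  define D where "D = (\<Sum>x\<in>S. real (deg F x) + W)"
  show ?thesis
  proof (cases "y \<in> S")
    case False
    then show ?thesis by (simp add: pmf_choice)
  next
    case True
    have "real (card S) * W \<le> D"
      unfolding D_def using sum_mono[of S "\<lambda>_. W" "\<lambda>x. real (deg F x) + W"] by simp
    moreover have "real (card S) * W > 0"
      using assms(1,6) \<open>S \<noteq> {}\<close> by (simp add: card_gt_0_iff)
    ultimately have D_pos: "D > 0" and "(D + 2) / D \<le> 1 + 2 / (real (card S) * W)"
      by (simp_all add: add_divide_distrib frac_le)
    moreover have "d \<ge> 0" unfolding d_def by simp
    ultimately have "(D + 2) / D * ((d + W) / (D + 2))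
        \<le> (1 + 2 / (real (card S) * W)) * ((d + W) / (D + 2))"
      using assms(6) by (intro mult_right_mono) auto
    moreover have "(D + 2) / D * ((d + W) / (D + 2)) = (d + W) / D"
      using D_pos by (simp add: divide_simps)
    ultimately have "(d + W) / D \<le> (1 + 2 / (real (card S) * W)) * ((d + W) / (D + 2))"
      by simp
    also have "\<dots> \<le> (1 + 2 / (real (card S) * W)) * ((d + (if y \<in> e then 1 else 0) + W) / (D + 2))"
      using D_pos \<open>real (card S) * W > 0\<close> by (intro mult_left_mono divide_right_mono) auto
    finally have "(d + W) / D
        \<le> (1 + 2 / (real (card S) * W)) * ((d + (if y \<in> e then 1 else 0) + W) / (D + 2))" .
    moreover note pmf_degree_choice_insert_edge[OF assms True, folded d_def D_def]
    moreover have "pmf (weighted_choice (\<lambda>u. real (deg F u) + W) S) y = (d + W) / D"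
      using True by (simp add: pmf_choice d_def D_def)
    ultimately show ?thesis by simp
  qed
qed

lemma pmf_alg_rec_Suc_Nil: "pmf (alg_rec eps n (Suc k) S E) [] = 0"
  by (auto simp add: pmf_eq_0_set_pmf)

lemma pmf_alg_rec_Suc_Cons:
  "pmf (alg_rec eps n (Suc k) S E) (y # ys) =
   pmf (weighted_choice (\<lambda>u. real (deg E u) + noise_weight eps n (n - k)) S) y *
   pmf (alg_rec eps n k (S - {y}) (remove_incident E y)) ys"
proof -
  let ?p = "weighted_choice (\<lambda>u. real (deg E u) + noise_weight eps n (n - k)) S"
  let ?q = "\<lambda>v. alg_rec eps n k (S - {v}) (remove_incident E v)"
  have cons: "pmf (map_pmf ((#) v) (?q v)) (y # ys) = (if v = y then pmf (?q y) ys else 0)" for v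
  proof -
    have "(#) v -` {y # ys} = (if v = y then {ys} else {})" by auto
    then show ?thesis by (simp add: pmf_map measure_pmf_single)
  qed
  have "pmf (alg_rec eps n (Suc k) S E) (y # ys) = (LINT v|?p. (if v = y then pmf (?q y) ys else 0))"
    by (simp add: pmf_bind cons)
  also have "\<dots> = (\<Sum>v\<in>{y}. pmf ?p v *\<^sub>R (if v = y then pmf (?q y) ys else 0))"
    by (rule integral_measure_pmf) (auto split: if_split_asm)
  finally show ?thesis by simp
qed

lemma noise_weight_remaining:
  "Suc k \<le> n \<Longrightarrow> noise_weight eps n (n - k) = 4 / eps * sqrt (real n / real (Suc k))"
  by (simp add: noise_weight_def of_nat_diff)

lemma noise_weight_ge:
  assumes "eps > 0" "Suc k \<le> n"
  shows "4 / eps \<le> noise_weight eps n (n - k)"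
proof -
  have "1 \<le> sqrt (real n / real (Suc k))"
    using assms(2) by (simp del: of_nat_Suc)
  then have "4 / eps * 1 \<le> 4 / eps * sqrt (real n / real (Suc k))"
    using assms(1) by (intro mult_left_mono) auto
  then show ?thesis
    by (simp add: noise_weight_remaining[OF assms(2)] del: of_nat_Suc)
qed

lemma noise_weight_pos: "eps > 0 \<Longrightarrow> Suc k \<le> n \<Longrightarrow> noise_weight eps n (n - k) > 0"
  by (rule less_le_trans[OF _ noise_weight_ge]) auto

lemma pmf_alg_rec_insert_edge_le:
  assumes "eps > 0" "card S = k" "k \<le> n" "finite F" "e \<notin> F" "e \<subseteq> S" "card e = 2"
  shows "pmf (alg_rec eps n k S (insert e F)) xs \<le> (1 + eps / 4) * pmf (alg_rec eps n k S F) xs"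
  using assms(2-)
proof (induction k arbitrary: S F xs)
  case 0
  then show ?case using assms(1) by (simp add: indicator_def)
next
  case (Suc k)
  define W where "W = noise_weight eps n (n - k)"
  have "4 / eps \<le> W" "W > 0"
    using noise_weight_ge noise_weight_pos assms(1) Suc.prems(2) unfolding W_def by auto
  then have W_small: "1 + 1 / W \<le> 1 + eps / 4"
    using assms(1) by (simp add: field_simps)
  show ?case
  proof (cases xs)
    case Nil
    then show ?thesis unfolding Nil pmf_alg_rec_Suc_Nil by simp
  next
    case (Cons y ys)
    have "finite S" by (rule card_ge_0_finite) (use Suc.prems(1) in simp)
    let ?pE = "pmf (weighted_choice (\<lambda>u. real (deg (insert e F) u) + W) S) y"
    let ?pF = "pmf (weighted_choice (\<lambda>u. real (deg F u) + W) S) y"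
    let ?rE = "pmf (alg_rec eps n k (S - {y}) (remove_incident (insert e F) y)) ys"
    let ?rF = "pmf (alg_rec eps n k (S - {y}) (remove_incident F y)) ys"
    have choice: "?pE \<le> (if y \<in> e then 1 + 1 / W else 1) * ?pF"
      by (rule pmf_degree_choice_insert_edge_le) (use Suc.prems \<open>finite S\<close> \<open>W > 0\<close> in auto)
    show ?thesis
    proof (cases "y \<in> S")
      case False
      then have "?pE = 0"
        using Suc.prems \<open>finite S\<close> \<open>W > 0\<close> by (subst pmf_degree_choice) auto
      then show ?thesis
        unfolding Cons pmf_alg_rec_Suc_Cons W_def[symmetric] using assms(1) by simp
    next
      case True
      have rest: "?rE \<le> (if y \<in> e then 1 else 1 + eps / 4) * ?rF"
      proof (cases "y \<in> e")
        case True
        then have "remove_incident (insert e F) y = remove_incident F y"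
          by (auto simp: remove_incident_def)
        then show ?thesis using True by simp
      next
        case False
        then have "remove_incident (insert e F) y = insert e (remove_incident F y)"
          by (auto simp: remove_incident_def)
        then show ?thesis
          using False Suc.IH[of "S - {y}" "remove_incident F y" ys] Suc.prems \<open>y \<in> S\<close>
          by (auto simp: remove_incident_def)
      qed
      have "?pE * ?rE \<le> ((if y \<in> e then 1 + 1 / W else 1) * ?pF) * ((if y \<in> e then 1 else 1 + eps / 4) * ?rF)"
        using choice rest \<open>W > 0\<close> by (intro mult_mono) auto
      also have "\<dots> = ((if y \<in> e then 1 + 1 / W else 1) * (if y \<in> e then 1 else 1 + eps / 4)) * (?pF * ?rF)"
        by (simp only: mult_ac)
      also have "\<dots> \<le> (1 + eps / 4) * (?pF * ?rF)"
        using W_small by (intro mult_right_mono) auto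
      finally show ?thesis unfolding Cons pmf_alg_rec_Suc_Cons W_def[symmetric] .
    qed
  qed
qed

text \<open>The factor indexed by \<open>j\<close> bounds the step taken with \<open>j + 1\<close> vertices left.\<close>

definition removal_factor :: "real \<Rightarrow> nat \<Rightarrow> nat \<Rightarrow> real" where
  "removal_factor eps n k = (\<Prod>j<k. 1 + 2 / (real (Suc j) * noise_weight eps n (n - j)))"

lemma removal_factor_ge_1: "eps > 0 \<Longrightarrow> k \<le> n \<Longrightarrow> 1 \<le> removal_factor eps n k"
  unfolding removal_factor_def
proof (rule prod_ge_1)
  fix j assume "eps > 0" "k \<le> n" "j \<in> {..<k}"
  then have "noise_weight eps n (n - j) > 0" by (intro noise_weight_pos) auto
  then show "1 \<le> 1 + 2 / (real (Suc j) * noise_weight eps n (n - j))" by simp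
qed

lemma pmf_alg_rec_le_insert_edge:
  assumes "eps > 0" "card S = k" "k \<le> n" "finite F" "e \<notin> F" "e \<subseteq> S" "card e = 2"
  shows "pmf (alg_rec eps n k S F) xs \<le> removal_factor eps n k * pmf (alg_rec eps n k S (insert e F)) xs"
  using assms(2-)
proof (induction k arbitrary: S F xs)
  case 0
  then show ?case by (simp add: removal_factor_def)
next
  case (Suc k)
  define W where "W = noise_weight eps n (n - k)"
  have "W > 0" using noise_weight_pos assms(1) Suc.prems(2) unfolding W_def by auto
  define g where "g = 1 + 2 / (real (Suc k) * W)"
  have factor_Suc: "removal_factor eps n (Suc k) = g * removal_factor eps n k"
    unfolding removal_factor_def g_def W_def by simp
  show ?case
  proof (cases xs)
    case Nil
    then show ?thesis unfolding Nil pmf_alg_rec_Suc_Nil by simp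
  next
    case (Cons y ys)
    have "finite S" by (rule card_ge_0_finite) (use Suc.prems(1) in simp)
    let ?pE = "pmf (weighted_choice (\<lambda>u. real (deg (insert e F) u) + W) S) y"
    let ?pF = "pmf (weighted_choice (\<lambda>u. real (deg F u) + W) S) y"
    let ?rE = "pmf (alg_rec eps n k (S - {y}) (remove_incident (insert e F) y)) ys"
    let ?rF = "pmf (alg_rec eps n k (S - {y}) (remove_incident F y)) ys"
    have choice: "?pF \<le> g * ?pE"
      unfolding g_def using pmf_degree_choice_le_insert_edge[of S F e W y] Suc.prems \<open>finite S\<close> \<open>W > 0\<close>
      by auto
    show ?thesis
    proof (cases "y \<in> S")
      case False
      then have "?pF = 0"
        using Suc.prems \<open>finite S\<close> \<open>W > 0\<close> by (subst pmf_degree_choice) auto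
      moreover have "removal_factor eps n (Suc k) \<ge> 0"
        using removal_factor_ge_1[OF assms(1)] Suc.prems(2) by (meson order_trans zero_le_one)
      ultimately show ?thesis
        unfolding Cons pmf_alg_rec_Suc_Cons W_def[symmetric] by simp
    next
      case True
      have rest: "?rF \<le> removal_factor eps n k * ?rE"
      proof (cases "y \<in> e")
        case True
        then have "remove_incident (insert e F) y = remove_incident F y"
          by (auto simp: remove_incident_def)
        then show ?thesis
          using removal_factor_ge_1[OF assms(1), of k n] Suc.prems(2)
          by (simp add: mult_le_cancel_right1)
      next
        case False
        then have "remove_incident (insert e F) y = insert e (remove_incident F y)"
          by (auto simp: remove_incident_def)
        then show ?thesis
          using False Suc.IH[of "S - {y}" "remove_incident F y" ys] Suc.prems \<open>y \<in> S\<close>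
          by (auto simp: remove_incident_def)
      qed
      have "?pF * ?rF \<le> (g * ?pE) * (removal_factor eps n k * ?rE)"
        using choice rest \<open>W > 0\<close> unfolding g_def by (intro mult_mono) auto
      then show ?thesis
        unfolding Cons pmf_alg_rec_Suc_Cons W_def[symmetric] factor_Suc by (simp add: ac_simps)
    qed
  qed
qed

lemma sum_inverse_sqrt_le: "(\<Sum>j<n. 1 / sqrt (real (Suc j))) \<le> 2 * sqrt (real n)"
proof (induction n)
  case 0
  then show ?case by simp
next
  case (Suc n)
  define a where "a = sqrt (real (Suc n))"
  define b where "b = sqrt (real n)"
  have "a > 0" "b \<ge> 0" "a\<^sup>2 = b\<^sup>2 + 1" unfolding a_def b_def by simp_all
  moreover have "0 \<le> (a - b)\<^sup>2" by simp
  ultimately have "1 / a \<le> 2 * a - 2 * b"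
    by (simp add: divide_simps power2_eq_square algebra_simps)
  then show ?case using Suc unfolding a_def b_def by simp
qed

lemma removal_factor_le_exp:
  assumes "eps > 0"
  shows "removal_factor eps n n \<le> exp eps"
proof (cases "n = 0")
  case True
  then show ?thesis using assms by (simp add: removal_factor_def)
next
  case False
  define t where "t j = 2 / (real (Suc j) * noise_weight eps n (n - j))" for j
  have t_eq: "t j = eps / (2 * sqrt n) * (1 / sqrt (real (Suc j)))" if "j < n" for j
  proof -
    define s where "s = sqrt (real (Suc j))"
    have "s > 0" "real (Suc j) = s * s" "sqrt n > 0"
      using False unfolding s_def by (simp_all del: of_nat_Suc)
    moreover have nw: "noise_weight eps n (n - j) = 4 / eps * (sqrt n / s)"
      using that unfolding s_def by (simp add: noise_weight_remaining real_sqrt_divide del: of_nat_Suc)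
    ultimately show ?thesis
      using assms unfolding t_def s_def[symmetric] nw by (simp add: field_simps del: of_nat_Suc)
  qed
  have "removal_factor eps n n = (\<Prod>j<n. 1 + t j)"
    by (simp add: removal_factor_def t_def)
  also have "\<dots> \<le> (\<Prod>j<n. exp (t j))"
  proof (rule prod_mono)
    fix j assume "j \<in> {..<n}"
    then have "noise_weight eps n (n - j) > 0" by (intro noise_weight_pos[OF assms]) auto
    then show "0 \<le> 1 + t j \<and> 1 + t j \<le> exp (t j)"
      using exp_ge_add_one_self[of "t j"] by (simp add: t_def add.commute)
  qed
  also have "\<dots> = exp (eps / (2 * sqrt n) * (\<Sum>j<n. 1 / sqrt (real (Suc j))))"
    by (simp add: exp_sum t_eq sum_distrib_left)
  also have "\<dots> \<le> exp (eps / (2 * sqrt n) * (2 * sqrt n))"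
    using sum_inverse_sqrt_le[of n] assms by (intro exp_mono mult_left_mono) auto
  also have "\<dots> = exp eps" using False by simp
  finally show ?thesis .
qed

lemma finite_edge_set: "finite V \<Longrightarrow> edge_set_on V E \<Longrightarrow> finite E"
  unfolding edge_set_on_def by (rule finite_subset[where B = "Pow V"]) auto

lemma symmetric_difference_singletonE:
  assumes "(A - B) \<union> (B - A) = {e}"
  obtains "A = insert e B" "e \<notin> B" | "B = insert e A" "e \<notin> A"
proof -
  have sd: "(x \<in> A \<and> x \<notin> B) \<or> (x \<in> B \<and> x \<notin> A) \<longleftrightarrow> x = e" for x
    using assms by (simp add: set_eq_iff)
  show ?thesis
  proof (cases "e \<in> A")
    case True
    then have "e \<notin> B" using sd[of e] by simp
    moreover have "A = insert e B"
    proof (rule set_eqI)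
      show "x \<in> A \<longleftrightarrow> x \<in> insert e B" for x using sd[of x] True \<open>e \<notin> B\<close> by auto
    qed
    ultimately show ?thesis by (intro that(1))
  next
    case False
    then have "e \<in> B" using sd[of e] by simp
    moreover have "B = insert e A"
    proof (rule set_eqI)
      show "x \<in> B \<longleftrightarrow> x \<in> insert e A" for x using sd[of x] False \<open>e \<in> B\<close> by auto
    qed
    ultimately show ?thesis using False by (intro that(2))
  qed
qed

lemma measure_pmf_le_scaled:
  assumes "c \<ge> 0" and "\<And>x. pmf p x \<le> c * pmf q x"
  shows "measure_pmf.prob p A \<le> c * measure_pmf.prob q A"
proof -
  have "emeasure (measure_pmf p) A \<le> ennreal c * emeasure (measure_pmf q) A"
    unfolding nn_integral_pmf[symmetric]
    by (subst nn_integral_cmult[symmetric])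
       (use assms in \<open>auto intro!: nn_integral_mono simp: ennreal_mult[symmetric]\<close>)
  then show ?thesis
    using assms(1) by (simp add: measure_pmf.emeasure_eq_measure ennreal_mult[symmetric])
qed

text \<open>The bound holds for every set of outcomes.\<close>

theorem mainTheorem6:
  fixes V :: "'a set" and eps :: real and A B :: "'a set set" and P :: "'a list set"
  assumes "finite V"
    and "eps > 0"
    and "edge_set_on V A" and "edge_set_on V B"
    and "\<exists>e. (A - B) \<union> (B - A) = {e}"
    and "P \<subseteq> {xs. distinct xs \<and> set xs = V}"
  shows "measure_pmf.prob (ALG eps V A) P \<le> exp eps * measure_pmf.prob (ALG eps V B) P"
proof (rule measure_pmf_le_scaled)
  fix xs
  obtain e where e: "(A - B) \<union> (B - A) = {e}" using assms(5) by blast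
  then show "pmf (ALG eps V A) xs \<le> exp eps * pmf (ALG eps V B) xs"
  proof (cases rule: symmetric_difference_singletonE)
    case 1
    then have "e \<subseteq> V" "card e = 2" using assms(3) by (auto simp: edge_set_on_def)
    then have "pmf (ALG eps V A) xs \<le> (1 + eps / 4) * pmf (ALG eps V B) xs"
      unfolding ALG_def \<open>A = insert e B\<close> using 1 assms finite_edge_set
      by (intro pmf_alg_rec_insert_edge_le) auto
    also have "\<dots> \<le> exp eps * pmf (ALG eps V B) xs"
    proof (rule mult_right_mono)
      show "1 + eps / 4 \<le> exp eps" using exp_ge_add_one_self[of eps] assms(2) by linarith
    qed simp
    finally show ?thesis .
  next
    case 2
    then have "e \<subseteq> V" "card e = 2" using assms(4) by (auto simp: edge_set_on_def)
    then have "pmf (ALG eps V A) xs \<le> removal_factor eps (card V) (card V) * pmf (ALG eps V B) xs"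
      unfolding ALG_def \<open>B = insert e A\<close> using 2 assms finite_edge_set
      by (intro pmf_alg_rec_le_insert_edge) auto
    also have "\<dots> \<le> exp eps * pmf (ALG eps V B) xs"
      using removal_factor_le_exp[OF assms(2)] by (intro mult_right_mono) auto
    finally show ?thesis .
  qed
qed simp

end
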